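(* Fix $\eta>0$, let $\mu\in\mathbb{L}_2$ and $\lambda\in\mathbb{R}^{2md}$, and let $\delta=\max_{e\in E,i\in e}\|\nu^\lambda_{e,i}\|_1$. Then there exists $\hat\mu$ in the slack polytope $\mathbb{L}_2^{\nu^\lambda}$ such that $$\|\mu-\hat\mu\|_1\le16(m+n)d\delta+2\sum_{e\in E,i\in e}\|\nu^\lambda_{e,i}\|_1.$$
   Context: Let $G=(V,E)$ be a finite undirected graph with $n=|V|$, $m=|E|$, every vertex incident to at least one edge; $N_i=\{e\in E:i\in e\}$. $\chi$ is a finite label set with $d=|\chi|\ge2$. Costs $C_i\in\mathbb{R}^\chi$, $C_e\in\mathbb{R}^{\chi^2}$; for $e=\{i,j\}$, $x_e=(x_i,x_j)$, $(x_e)_i=x_i$. For $\mu=((\mu_i)_{i\in V},(\mu_e)_{e\in E})$, $\|\mu\|_1$ is the sum of absolute values of all entries. $\mathbb{L}_2=\{\mu\ge0:\mu_i\in\Sigma^d\ \forall i,\ \sum_{x_e:(x_e)_i=x}\mu_e(x_e)=\mu_i(x)\ \forall e,\,i\in e,\,x\}$, $\Sigma^d$ the probability simplex on $\chi$. For a vector $\nu=(\nu_{e,i})_{e\in E,i\in e}$, $\nu_{e,i}\in\mathbb{R}^\chi$, the slack polytope is $\mathbb{L}_2^\nu=\{\mu\ge0:\mu_i\in\Sigma^d\ \forall i,\ \sum_{x_e:(x_e)_i=x}\mu_e(x_e)=\mu_i(x)+\nu_{e,i}(x)\ \forall e,\,i\in e,\,x\}$. For $\lambda\in\mathbb{R}^{2md}$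 (indexed by $(e,i,x)$): $\mu^\lambda_i(x)\propto\exp(-\eta C_i(x)+\eta\sum_{e\in N_i}\lambda_{e,i}(x))$, $\mu^\lambda_e(x_e)\propto\exp(-\eta C_e(x_e)-\eta\sum_{i\in e}\lambda_{e,i}((x_e)_i))$, each normalized; $S^\lambda_{e,i}(x)=\sum_{x_e:(x_e)_i=x}\mu^\lambda_e(x_e)$; slack $\nu^\lambda_{e,i}=S^\lambda_{e,i}-\mu^\lambda_i$. *)

theory Defs
  imports "HOL-Analysis.Analysis"
begin

text \<open>A joint labelling x_e of an edge e is an element of PiE e (\<lambda>_. X), i.e. a map
from the two endpoints of e to labels; (x_e)_i is simply x_e i.
A "marginal vector" mu is a pair (mv, me) with mv :: 'v \<Rightarrow> 'l \<Rightarrow> real (node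
marginals mu_i(x)) and me :: 'v set \<Rightarrow> ('v \<Rightarrow> 'l) \<Rightarrow> real (edge marginals mu_e(x_e)).
Slack vectors nu and dual vectors lambda are indexed by (e, i, x).\<close>

definition edge_labs :: "'l set \<Rightarrow> 'v set \<Rightarrow> ('v \<Rightarrow> 'l) set" where
  "edge_labs X e = PiE e (\<lambda>_. X)"

definition graph_ok :: "'v set \<Rightarrow> 'v set set \<Rightarrow> bool" where
  "graph_ok V E \<longleftrightarrow> finite V \<and> (\<forall>e\<in>E. e \<subseteq> V \<and> card e = 2)
     \<and> (\<forall>i\<in>V. \<exists>e\<in>E. i \<in> e)"

definition slack_polytope ::
  "'v set \<Rightarrow> 'v set set \<Rightarrow> 'l set \<Rightarrow> ('v set \<Rightarrow> 'v \<Rightarrow> 'l \<Rightarrow> real)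
   \<Rightarrow> ('v \<Rightarrow> 'l \<Rightarrow> real) \<Rightarrow> ('v set \<Rightarrow> ('v \<Rightarrow> 'l) \<Rightarrow> real) \<Rightarrow> bool" where
  "slack_polytope V E X nu mv me \<longleftrightarrow>
     (\<forall>i\<in>V. \<forall>x\<in>X. mv i x \<ge> 0)
   \<and> (\<forall>e\<in>E. \<forall>xe\<in>edge_labs X e. me e xe \<ge> 0)
   \<and> (\<forall>i\<in>V. (\<Sum>x\<in>X. mv i x) = 1)
   \<and> (\<forall>e\<in>E. \<forall>i\<in>e. \<forall>x\<in>X.
        (\<Sum>xe\<in>{xe\<in>edge_labs X e. xe i = x}. me e xe) = mv i x + nu e i x)"

definition local_polytope ::
  "'v set \<Rightarrow> 'v set set \<Rightarrow> 'l set
   \<Rightarrow> ('v \<Rightarrow> 'l \<Rightarrow> real) \<Rightarrow> ('v set \<Rightarrow> ('v \<Rightarrow> 'l) \<Rightarrow> real) \<Rightarrow> bool" where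
  "local_polytope V E X mv me \<longleftrightarrow> slack_polytope V E X (\<lambda>_ _ _. 0) mv me"

definition l1_dist ::
  "'v set \<Rightarrow> 'v set set \<Rightarrow> 'l set
   \<Rightarrow> ('v \<Rightarrow> 'l \<Rightarrow> real) \<Rightarrow> ('v set \<Rightarrow> ('v \<Rightarrow> 'l) \<Rightarrow> real)
   \<Rightarrow> ('v \<Rightarrow> 'l \<Rightarrow> real) \<Rightarrow> ('v set \<Rightarrow> ('v \<Rightarrow> 'l) \<Rightarrow> real) \<Rightarrow> real" where
  "l1_dist V E X mv me mv' me' =
     (\<Sum>i\<in>V. \<Sum>x\<in>X. \<bar>mv i x - mv' i x\<bar>)
   + (\<Sum>e\<in>E. \<Sum>xe\<in>edge_labs X e. \<bar>me e xe - me' e xe\<bar>)"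

definition mu_lam_v ::
  "'v set set \<Rightarrow> 'l set \<Rightarrow> real \<Rightarrow> ('v \<Rightarrow> 'l \<Rightarrow> real)
   \<Rightarrow> ('v set \<Rightarrow> 'v \<Rightarrow> 'l \<Rightarrow> real) \<Rightarrow> 'v \<Rightarrow> 'l \<Rightarrow> real" where
  "mu_lam_v E X \<eta> Cv lam i x =
     exp (- \<eta> * Cv i x + \<eta> * (\<Sum>e\<in>{e\<in>E. i \<in> e}. lam e i x))
     / (\<Sum>y\<in>X. exp (- \<eta> * Cv i y + \<eta> * (\<Sum>e\<in>{e\<in>E. i \<in> e}. lam e i y)))"

definition mu_lam_e ::
  "'l set \<Rightarrow> real \<Rightarrow> ('v set \<Rightarrow> ('v \<Rightarrow> 'l) \<Rightarrow> real)
   \<Rightarrow> ('v set \<Rightarrow> 'v \<Rightarrow> 'l \<Rightarrow> real) \<Rightarrow> 'v set \<Rightarrow> ('v \<Rightarrow> 'l) \<Rightarrow> real" where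
  "mu_lam_e X \<eta> Ce lam e xe =
     exp (- \<eta> * Ce e xe - \<eta> * (\<Sum>i\<in>e. lam e i (xe i)))
     / (\<Sum>ye\<in>edge_labs X e. exp (- \<eta> * Ce e ye - \<eta> * (\<Sum>i\<in>e. lam e i (ye i))))"

definition S_lam ::
  "'l set \<Rightarrow> real \<Rightarrow> ('v set \<Rightarrow> ('v \<Rightarrow> 'l) \<Rightarrow> real)
   \<Rightarrow> ('v set \<Rightarrow> 'v \<Rightarrow> 'l \<Rightarrow> real) \<Rightarrow> 'v set \<Rightarrow> 'v \<Rightarrow> 'l \<Rightarrow> real" where
  "S_lam X \<eta> Ce lam e i x =
     (\<Sum>xe\<in>{xe\<in>edge_labs X e. xe i = x}. mu_lam_e X \<eta> Ce lam e xe)"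

definition nu_lam ::
  "'v set set \<Rightarrow> 'l set \<Rightarrow> real \<Rightarrow> ('v \<Rightarrow> 'l \<Rightarrow> real) \<Rightarrow> ('v set \<Rightarrow> ('v \<Rightarrow> 'l) \<Rightarrow> real)
   \<Rightarrow> ('v set \<Rightarrow> 'v \<Rightarrow> 'l \<Rightarrow> real) \<Rightarrow> 'v set \<Rightarrow> 'v \<Rightarrow> 'l \<Rightarrow> real" where
  "nu_lam E X \<eta> Cv Ce lam e i x = S_lam X \<eta> Ce lam e i x - mu_lam_v E X \<eta> Cv lam i x"

definition nu_norm :: "'l set \<Rightarrow> ('v set \<Rightarrow> 'v \<Rightarrow> 'l \<Rightarrow> real) \<Rightarrow> 'v set \<Rightarrow> 'v \<Rightarrow> real" where
  "nu_norm X nu e i = (\<Sum>x\<in>X. \<bar>nu e i x\<bar>)"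

end

theory Submission
  imports Defs
begin

text \<open>Points of slack polytopes whose slacks sum to zero are probability vectors blockwise,
so any two of them are at l1 distance at most 2 per node and per edge. The Gibbs marginals
\<open>\<mu>\<^sup>\<lambda>\<close> lie in the slack polytope of \<open>\<nu>\<^sup>\<lambda>\<close>, which settles the case \<open>d \<delta> > 1\<close>.
Otherwise put \<open>t = d \<delta>\<close> and mix \<open>\<mu>\<close>, with weight \<open>1 - t\<close>, with a measure of mass \<open>t\<close>
per block: the constant \<open>\<delta>\<close> on the nodes and, on an edge, the product of the nonnegative
vectors \<open>\<delta> + \<nu>\<^sub>e\<^sub>,\<^sub>k\<close> (each of mass \<open>t\<close>, as the slacks sum to zero) rescaled to mass \<open>t\<close>.
The marginals of that product are exactly \<open>\<delta> + \<nu>\<^sub>e\<^sub>,\<^sub>i\<close>, which produces the slack, and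
every block moves by at most \<open>2 t\<close>.\<close>

lemma finite_edge_labs: "finite e \<Longrightarrow> finite X \<Longrightarrow> finite (edge_labs X e)"
  unfolding edge_labs_def by (simp add: finite_PiE)

lemma edge_labs_nonempty: "X \<noteq> {} \<Longrightarrow> edge_labs X e \<noteq> {}"
  unfolding edge_labs_def by (simp add: PiE_eq_empty_iff)

lemma sum_edge_labs_by_label:
  assumes "finite e" "finite X" "i \<in> e"
  shows "(\<Sum>x\<in>X. \<Sum>xe\<in>{xe\<in>edge_labs X e. xe i = x}. g xe) = (\<Sum>xe\<in>edge_labs X e. g xe)"
proof -
  have "(\<lambda>xe. xe i) ` edge_labs X e \<subseteq> X"
    using assms(3) unfolding edge_labs_def by auto
  from sum.group[OF finite_edge_labs[OF assms(1,2)] assms(2) this, of g]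
  show ?thesis by simp
qed

lemma sum_edge_labs_label_prod:
  fixes f :: "'v \<Rightarrow> 'l \<Rightarrow> real"
  assumes "finite e" "finite X" "i \<in> e" "x \<in> X"
  shows "(\<Sum>xe\<in>{xe\<in>edge_labs X e. xe i = x}. \<Prod>k\<in>e. f k (xe k))
       = f i x * (\<Prod>k\<in>e-{i}. \<Sum>y\<in>X. f k y)"
proof -
  define B where "B = (\<lambda>k. if k = i then {x} else X)"
  have "{xe\<in>edge_labs X e. xe i = x} = PiE e B"
    using assms unfolding edge_labs_def B_def
    by (auto simp: PiE_iff extensional_def split: if_splits)
  then have "(\<Sum>xe\<in>{xe\<in>edge_labs X e. xe i = x}. \<Prod>k\<in>e. f k (xe k))
           = (\<Prod>k\<in>e. \<Sum>y\<in>B k. f k y)"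
    using prod_sum_PiE[of e B f] assms unfolding B_def by auto
  also have "\<dots> = (\<Sum>y\<in>B i. f i y) * (\<Prod>k\<in>e-{i}. \<Sum>y\<in>B k. f k y)"
    using assms by (simp add: prod.remove)
  also have "\<dots> = f i x * (\<Prod>k\<in>e-{i}. \<Sum>y\<in>X. f k y)"
    unfolding B_def by (auto intro!: prod.cong)
  finally show ?thesis .
qed

lemma sum_abs_diff_le_sum_add:
  fixes a b :: "'a \<Rightarrow> real"
  assumes "\<And>x. x \<in> A \<Longrightarrow> a x \<ge> 0" "\<And>x. x \<in> A \<Longrightarrow> b x \<ge> 0"
  shows "(\<Sum>x\<in>A. \<bar>a x - b x\<bar>) \<le> (\<Sum>x\<in>A. a x) + (\<Sum>x\<in>A. b x)"
proof -
  have "(\<Sum>x\<in>A. \<bar>a x - b x\<bar>) \<le> (\<Sum>x\<in>A. a x + b x)"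
    using assms by (intro sum_mono) (simp add: abs_le_iff)
  then show ?thesis by (simp add: sum.distrib)
qed

lemma l1_dist_le_blockwise:
  assumes "\<And>i. i \<in> V \<Longrightarrow> (\<Sum>x\<in>X. \<bar>mv i x - mv' i x\<bar>) \<le> c"
    and "\<And>e. e \<in> E \<Longrightarrow> (\<Sum>xe\<in>edge_labs X e. \<bar>me e xe - me' e xe\<bar>) \<le> c"
  shows "l1_dist V E X mv me mv' me' \<le> c * real (card E + card V)"
proof -
  have "l1_dist V E X mv me mv' me' \<le> (\<Sum>i\<in>V. c) + (\<Sum>e\<in>E. c)"
    unfolding l1_dist_def using assms by (intro add_mono sum_mono)
  then show ?thesis by (simp add: algebra_simps)
qed

lemma slack_polytope_edge_sum:
  assumes "slack_polytope V E X nu mv me" "finite X"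
    and "e \<in> E" "finite e" "e \<subseteq> V" "e \<noteq> {}" "\<And>i. i \<in> e \<Longrightarrow> (\<Sum>x\<in>X. nu e i x) = 0"
  shows "(\<Sum>xe\<in>edge_labs X e. me e xe) = 1"
proof -
  obtain i where i: "i \<in> e" using assms(6) by auto
  have "(\<Sum>xe\<in>edge_labs X e. me e xe) = (\<Sum>x\<in>X. \<Sum>xe\<in>{xe\<in>edge_labs X e. xe i = x}. me e xe)"
    using sum_edge_labs_by_label[OF assms(4,2) i, of "me e"] by simp
  also have "\<dots> = (\<Sum>x\<in>X. mv i x) + (\<Sum>x\<in>X. nu e i x)"
    using assms(1,3) i unfolding slack_polytope_def by (simp add: sum.distrib)
  also have "\<dots> = 1"
    using assms(1,5,7) i unfolding slack_polytope_def by auto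
  finally show ?thesis .
qed

lemma slack_polytope_l1_dist_le:
  assumes "slack_polytope V E X nu mv me" "slack_polytope V E X nu' mv' me'" "finite X"
    and "\<And>e. e \<in> E \<Longrightarrow> finite e \<and> e \<subseteq> V \<and> e \<noteq> {}"
    and "\<And>e i. e \<in> E \<Longrightarrow> i \<in> e \<Longrightarrow> (\<Sum>x\<in>X. nu e i x) = 0"
    and "\<And>e i. e \<in> E \<Longrightarrow> i \<in> e \<Longrightarrow> (\<Sum>x\<in>X. nu' e i x) = 0"
  shows "l1_dist V E X mv me mv' me' \<le> 2 * real (card E + card V)"
proof (rule l1_dist_le_blockwise)
  fix i assume i: "i \<in> V"
  have "(\<Sum>x\<in>X. \<bar>mv i x - mv' i x\<bar>) \<le> (\<Sum>x\<in>X. mv i x) + (\<Sum>x\<in>X. mv' i x)"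
    using assms(1,2) i unfolding slack_polytope_def by (intro sum_abs_diff_le_sum_add) auto
  then show "(\<Sum>x\<in>X. \<bar>mv i x - mv' i x\<bar>) \<le> 2"
    using assms(1,2) i unfolding slack_polytope_def by simp
next
  fix e assume e: "e \<in> E"
  have "(\<Sum>xe\<in>edge_labs X e. \<bar>me e xe - me' e xe\<bar>)
        \<le> (\<Sum>xe\<in>edge_labs X e. me e xe) + (\<Sum>xe\<in>edge_labs X e. me' e xe)"
    using assms(1,2) e unfolding slack_polytope_def by (intro sum_abs_diff_le_sum_add) auto
  then show "(\<Sum>xe\<in>edge_labs X e. \<bar>me e xe - me' e xe\<bar>) \<le> 2"
    using slack_polytope_edge_sum[OF assms(1,3) e] slack_polytope_edge_sum[OF assms(2,3) e]
      assms(4-6) e by simp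
qed

lemma slack_polytope_of_vanishing_slack:
  assumes "local_polytope V E X mv me" "\<And>e i x. e \<in> E \<Longrightarrow> i \<in> e \<Longrightarrow> x \<in> X \<Longrightarrow> nu e i x = 0"
  shows "slack_polytope V E X nu mv me"
  using assms unfolding local_polytope_def slack_polytope_def by simp

subsection \<open>Gibbs marginals\<close>

lemma mu_lam_v_nonneg: "mu_lam_v E X \<eta> Cv lam i x \<ge> 0"
  unfolding mu_lam_v_def by (intro divide_nonneg_nonneg sum_nonneg) auto

lemma mu_lam_e_nonneg: "mu_lam_e X \<eta> Ce lam e xe \<ge> 0"
  unfolding mu_lam_e_def by (intro divide_nonneg_nonneg sum_nonneg) auto

lemma sum_mu_lam_v:
  assumes "finite X" "X \<noteq> {}"
  shows "(\<Sum>x\<in>X. mu_lam_v E X \<eta> Cv lam i x) = 1"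
proof -
  have "(\<Sum>y\<in>X. exp (- \<eta> * Cv i y + \<eta> * (\<Sum>e\<in>{e\<in>E. i \<in> e}. lam e i y))) > 0"
    using assms by (intro sum_pos) auto
  then show ?thesis unfolding mu_lam_v_def by (simp add: sum_divide_distrib[symmetric])
qed

lemma sum_mu_lam_e:
  assumes "finite X" "X \<noteq> {}" "finite e"
  shows "(\<Sum>xe\<in>edge_labs X e. mu_lam_e X \<eta> Ce lam e xe) = 1"
proof -
  have "(\<Sum>ye\<in>edge_labs X e. exp (- \<eta> * Ce e ye - \<eta> * (\<Sum>i\<in>e. lam e i (ye i)))) > 0"
    using assms by (intro sum_pos finite_edge_labs edge_labs_nonempty) auto
  then show ?thesis unfolding mu_lam_e_def by (simp add: sum_divide_distrib[symmetric])
qed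

lemma sum_nu_lam_eq_0:
  assumes "finite X" "X \<noteq> {}" "finite e" "i \<in> e"
  shows "(\<Sum>x\<in>X. nu_lam E X \<eta> Cv Ce lam e i x) = 0"
  unfolding nu_lam_def S_lam_def using assms
  by (simp add: sum_subtractf sum_edge_labs_by_label sum_mu_lam_e sum_mu_lam_v)

lemma gibbs_marginals_in_slack_polytope:
  assumes "finite X" "X \<noteq> {}"
  shows "slack_polytope V E X (nu_lam E X \<eta> Cv Ce lam) (mu_lam_v E X \<eta> Cv lam) (mu_lam_e X \<eta> Ce lam)"
  unfolding slack_polytope_def
  by (simp add: nu_lam_def S_lam_def mu_lam_v_nonneg mu_lam_e_nonneg sum_mu_lam_v[OF assms])

subsection \<open>Product couplings\<close>

definition product_coupling :: "('v \<Rightarrow> 'l \<Rightarrow> real) \<Rightarrow> real \<Rightarrow> 'v set \<Rightarrow> ('v \<Rightarrow> 'l) \<Rightarrow> real" where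
  "product_coupling \<beta> t e xe = (\<Prod>k\<in>e. \<beta> k (xe k)) / t ^ (card e - 1)"

lemma product_coupling_nonneg:
  assumes "\<And>k y. k \<in> e \<Longrightarrow> y \<in> X \<Longrightarrow> \<beta> k y \<ge> 0" "t \<ge> 0" "xe \<in> edge_labs X e"
  shows "product_coupling \<beta> t e xe \<ge> 0"
  using assms unfolding product_coupling_def edge_labs_def
  by (intro divide_nonneg_nonneg prod_nonneg) auto

lemma product_coupling_marginal:
  assumes "finite e" "finite X" "i \<in> e" "x \<in> X"
    and "\<And>k. k \<in> e \<Longrightarrow> (\<Sum>y\<in>X. \<beta> k y) = t" "t \<noteq> 0"
  shows "(\<Sum>xe\<in>{xe\<in>edge_labs X e. xe i = x}. product_coupling \<beta> t e xe) = \<beta> i x"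
proof -
  have "(\<Sum>xe\<in>{xe\<in>edge_labs X e. xe i = x}. product_coupling \<beta> t e xe)
      = \<beta> i x * (\<Prod>k\<in>e-{i}. \<Sum>y\<in>X. \<beta> k y) / t ^ (card e - 1)"
    unfolding product_coupling_def
    by (simp add: sum_divide_distrib[symmetric] sum_edge_labs_label_prod assms(1-4))
  also have "\<dots> = \<beta> i x"
    using assms by (simp add: card_Diff_singleton)
  finally show ?thesis .
qed

lemma product_coupling_total:
  assumes "finite e" "finite X" "e \<noteq> {}"
    and "\<And>k. k \<in> e \<Longrightarrow> (\<Sum>y\<in>X. \<beta> k y) = t" "t \<noteq> 0"
  shows "(\<Sum>xe\<in>edge_labs X e. product_coupling \<beta> t e xe) = t"
proof -
  obtain i where i: "i \<in> e" using assms(3) by auto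
  have "(\<Sum>xe\<in>edge_labs X e. product_coupling \<beta> t e xe)
      = (\<Sum>x\<in>X. \<Sum>xe\<in>{xe\<in>edge_labs X e. xe i = x}. product_coupling \<beta> t e xe)"
    using sum_edge_labs_by_label[OF assms(1,2) i, of "product_coupling \<beta> t e"] by simp
  also have "\<dots> = (\<Sum>x\<in>X. \<beta> i x)"
    using product_coupling_marginal[OF assms(1,2) i _ assms(4,5)] by simp
  finally show ?thesis using assms(4) i by simp
qed

subsection \<open>Mixing a point of the local polytope with a product coupling\<close>

locale slack_mixture =
  fixes V :: "'v set" and E :: "'v set set" and X :: "'l set"
    and mv :: "'v \<Rightarrow> 'l \<Rightarrow> real" and me :: "'v set \<Rightarrow> ('v \<Rightarrow> 'l) \<Rightarrow> real"
    and nu :: "'v set \<Rightarrow> 'v \<Rightarrow> 'l \<Rightarrow> real" and \<delta> :: real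
  assumes local: "local_polytope V E X mv me"
    and finite_labels: "finite X" and labels_nonempty: "X \<noteq> {}"
    and edges: "\<And>e. e \<in> E \<Longrightarrow> finite e \<and> e \<subseteq> V \<and> e \<noteq> {}"
    and nu_sum: "\<And>e i. e \<in> E \<Longrightarrow> i \<in> e \<Longrightarrow> (\<Sum>x\<in>X. nu e i x) = 0"
    and nu_le: "\<And>e i x. e \<in> E \<Longrightarrow> i \<in> e \<Longrightarrow> x \<in> X \<Longrightarrow> \<bar>nu e i x\<bar> \<le> \<delta>"
    and delta_pos: "0 < \<delta>"
    and delta_le: "real (card X) * \<delta> \<le> 1"
begin

definition t :: real where "t = real (card X) * \<delta>"

definition mix_v :: "'v \<Rightarrow> 'l \<Rightarrow> real" where
  "mix_v i x = (1 - t) * mv i x + \<delta>"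

definition mix_e :: "'v set \<Rightarrow> ('v \<Rightarrow> 'l) \<Rightarrow> real" where
  "mix_e e xe = (1 - t) * me e xe + product_coupling (\<lambda>k y. \<delta> + nu e k y) t e xe"

lemma t_pos: "0 < t" and t_le_1: "t \<le> 1"
  using delta_pos delta_le finite_labels labels_nonempty by (auto simp: t_def card_gt_0_iff)

lemma mv_nonneg: "i \<in> V \<Longrightarrow> x \<in> X \<Longrightarrow> mv i x \<ge> 0"
  and me_nonneg: "e \<in> E \<Longrightarrow> xe \<in> edge_labs X e \<Longrightarrow> me e xe \<ge> 0"
  and mv_sum: "i \<in> V \<Longrightarrow> (\<Sum>x\<in>X. mv i x) = 1"
  and me_marginal: "e \<in> E \<Longrightarrow> i \<in> e \<Longrightarrow> x \<in> X \<Longrightarrow>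
        (\<Sum>xe\<in>{xe\<in>edge_labs X e. xe i = x}. me e xe) = mv i x"
  using local unfolding local_polytope_def slack_polytope_def by auto

lemma sum_shifted_nu: "e \<in> E \<Longrightarrow> k \<in> e \<Longrightarrow> (\<Sum>y\<in>X. \<delta> + nu e k y) = t"
  unfolding t_def using nu_sum by (simp add: sum.distrib)

lemma shifted_nu_nonneg: "e \<in> E \<Longrightarrow> k \<in> e \<Longrightarrow> y \<in> X \<Longrightarrow> 0 \<le> \<delta> + nu e k y"
  using nu_le[of e k y] by linarith

lemma coupling_nonneg:
  "e \<in> E \<Longrightarrow> xe \<in> edge_labs X e \<Longrightarrow> product_coupling (\<lambda>k y. \<delta> + nu e k y) t e xe \<ge> 0"
  using t_pos shifted_nu_nonneg by (intro product_coupling_nonneg) auto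

lemma mix_in_slack_polytope: "slack_polytope V E X nu mix_v mix_e"
  unfolding slack_polytope_def
proof (intro conjI ballI)
  fix i x assume "i \<in> V" "x \<in> X"
  then show "0 \<le> mix_v i x" unfolding mix_v_def using mv_nonneg t_le_1 delta_pos by simp
next
  fix e xe assume "e \<in> E" "xe \<in> edge_labs X e"
  then show "0 \<le> mix_e e xe" unfolding mix_e_def using me_nonneg coupling_nonneg t_le_1 by simp
next
  fix i assume "i \<in> V"
  then show "(\<Sum>x\<in>X. mix_v i x) = 1"
    unfolding mix_v_def t_def using mv_sum by (simp add: sum.distrib sum_distrib_left[symmetric])
next
  fix e i x assume e: "e \<in> E" and i: "i \<in> e" and x: "x \<in> X"
  have "(\<Sum>xe\<in>{xe\<in>edge_labs X e. xe i = x}. mix_e e xe) = (1 - t) * mv i x + (\<delta> + nu e i x)"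
    unfolding mix_e_def using me_marginal[OF e i x] edges[OF e] t_pos
      product_coupling_marginal[OF _ finite_labels i x sum_shifted_nu[OF e]]
    by (simp add: sum.distrib sum_distrib_left[symmetric])
  then show "(\<Sum>xe\<in>{xe\<in>edge_labs X e. xe i = x}. mix_e e xe) = mix_v i x + nu e i x"
    unfolding mix_v_def by simp
qed

lemma mix_l1_dist_le: "l1_dist V E X mv me mix_v mix_e \<le> 2 * t * real (card E + card V)"
proof (rule l1_dist_le_blockwise)
  fix i assume i: "i \<in> V"
  have "(\<Sum>x\<in>X. \<bar>mv i x - mix_v i x\<bar>) = (\<Sum>x\<in>X. \<bar>t * mv i x - \<delta>\<bar>)"
    unfolding mix_v_def by (simp add: algebra_simps)
  also have "\<dots> \<le> (\<Sum>x\<in>X. t * mv i x) + (\<Sum>x\<in>X. \<delta>)"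
    using mv_nonneg[OF i] t_pos delta_pos by (intro sum_abs_diff_le_sum_add) auto
  also have "\<dots> = 2 * t"
    using mv_sum[OF i] by (simp add: sum_distrib_left[symmetric] t_def)
  finally show "(\<Sum>x\<in>X. \<bar>mv i x - mix_v i x\<bar>) \<le> 2 * t" .
next
  fix e assume e: "e \<in> E"
  let ?P = "product_coupling (\<lambda>k y. \<delta> + nu e k y) t e"
  have "(\<Sum>xe\<in>edge_labs X e. \<bar>me e xe - mix_e e xe\<bar>) = (\<Sum>xe\<in>edge_labs X e. \<bar>t * me e xe - ?P xe\<bar>)"
    unfolding mix_e_def by (simp add: algebra_simps)
  also have "\<dots> \<le> (\<Sum>xe\<in>edge_labs X e. t * me e xe) + (\<Sum>xe\<in>edge_labs X e. ?P xe)"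
    using me_nonneg[OF e] coupling_nonneg[OF e] t_pos by (intro sum_abs_diff_le_sum_add) auto
  also have "\<dots> = 2 * t"
    using slack_polytope_edge_sum[OF local[unfolded local_polytope_def] finite_labels e]
      product_coupling_total[of e X "\<lambda>k y. \<delta> + nu e k y" t] finite_labels edges[OF e]
      t_pos sum_shifted_nu[OF e]
    by (simp add: sum_distrib_left[symmetric])
  finally show "(\<Sum>xe\<in>edge_labs X e. \<bar>me e xe - mix_e e xe\<bar>) \<le> 2 * t" .
qed

end

lemma exists_slack_polytope_point_near_small_slack:
  assumes "local_polytope V E X mv me" "finite X" "X \<noteq> {}"
    and "\<And>e. e \<in> E \<Longrightarrow> finite e \<and> e \<subseteq> V \<and> e \<noteq> {}"
    and "\<And>e i. e \<in> E \<Longrightarrow> i \<in> e \<Longrightarrow> (\<Sum>x\<in>X. nu e i x) = 0"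
    and nu_le: "\<And>e i x. e \<in> E \<Longrightarrow> i \<in> e \<Longrightarrow> x \<in> X \<Longrightarrow> \<bar>nu e i x\<bar> \<le> \<delta>"
    and "0 \<le> \<delta>" "real (card X) * \<delta> \<le> 1"
  shows "\<exists>mv' me'. slack_polytope V E X nu mv' me'
           \<and> l1_dist V E X mv me mv' me' \<le> 2 * real (card X) * \<delta> * real (card E + card V)"
proof (cases "\<delta> = 0")
  case True
  then show ?thesis using slack_polytope_of_vanishing_slack[OF assms(1)] nu_le
    by (intro exI[of _ mv] exI[of _ me]) (auto simp: l1_dist_def)
next
  case False
  interpret slack_mixture V E X mv me nu \<delta>
    using assms False by unfold_locales auto
  show ?thesis using mix_in_slack_polytope mix_l1_dist_le
    by (intro exI[of _ mix_v] exI[of _ mix_e]) (simp add: t_def)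
qed

lemma exists_slack_polytope_point_near:
  assumes "local_polytope V E X mv me" "finite X" "X \<noteq> {}"
    and "\<And>e. e \<in> E \<Longrightarrow> finite e \<and> e \<subseteq> V \<and> e \<noteq> {}"
    and "\<And>e i. e \<in> E \<Longrightarrow> i \<in> e \<Longrightarrow> (\<Sum>x\<in>X. nu e i x) = 0"
    and "\<And>e i x. e \<in> E \<Longrightarrow> i \<in> e \<Longrightarrow> x \<in> X \<Longrightarrow> \<bar>nu e i x\<bar> \<le> \<delta>" "0 \<le> \<delta>"
    and "slack_polytope V E X nu mv\<^sub>0 me\<^sub>0"
  shows "\<exists>mv' me'. slack_polytope V E X nu mv' me'
           \<and> l1_dist V E X mv me mv' me' \<le> 2 * real (card E + card V) * min 1 (real (card X) * \<delta>)"
proof (cases "real (card X) * \<delta> \<le> 1")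
  case True
  then show ?thesis
    using exists_slack_polytope_point_near_small_slack[OF assms(1-7) True] by (simp add: mult_ac)
next
  case False
  have "l1_dist V E X mv me mv\<^sub>0 me\<^sub>0 \<le> 2 * real (card E + card V)"
    using assms(1) unfolding local_polytope_def
    by (rule slack_polytope_l1_dist_le) (use assms in auto)
  then show ?thesis using assms(8) False by auto
qed

lemma graph_ok_edge: "graph_ok V E \<Longrightarrow> e \<in> E \<Longrightarrow> finite e \<and> e \<subseteq> V \<and> e \<noteq> {}"
  unfolding graph_ok_def by (metis card.empty card.infinite zero_neq_numeral)

lemma graph_ok_finite_edges: "graph_ok V E \<Longrightarrow> finite E"
  unfolding graph_ok_def by (meson Pow_iff finite_Pow_iff rev_finite_subset subsetI)

lemma graph_ok_no_edges: "graph_ok V {} \<Longrightarrow> V = {}"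
  unfolding graph_ok_def by blast

lemma abs_le_Max_nu_norm:
  assumes "finite E" "\<And>e. e \<in> E \<Longrightarrow> finite e" "finite X" "e \<in> E" "i \<in> e" "x \<in> X"
  shows "\<bar>nu e i x\<bar> \<le> Max {nu_norm X nu e i | e i. e \<in> E \<and> i \<in> e}"
proof -
  have "{nu_norm X nu e i | e i. e \<in> E \<and> i \<in> e} \<subseteq> (\<lambda>(e, i). nu_norm X nu e i) ` (SIGMA e:E. e)"
    by auto
  then have "finite {nu_norm X nu e i | e i. e \<in> E \<and> i \<in> e}"
    using assms(1,2) by (meson finite_SigmaI finite_imageI finite_subset)
  then have "nu_norm X nu e i \<le> Max {nu_norm X nu e i | e i. e \<in> E \<and> i \<in> e}"
    using assms(4,5) by (intro Max_ge) auto
  moreover have "\<bar>nu e i x\<bar> \<le> nu_norm X nu e i"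
    unfolding nu_norm_def using assms(3,6) by (intro member_le_sum) auto
  ultimately show ?thesis by linarith
qed

theorem lemma6:
  fixes V :: "'v set" and E :: "'v set set" and X :: "'l set"
    and Cv :: "'v \<Rightarrow> 'l \<Rightarrow> real" and Ce :: "'v set \<Rightarrow> ('v \<Rightarrow> 'l) \<Rightarrow> real"
    and \<eta> :: real and lam :: "'v set \<Rightarrow> 'v \<Rightarrow> 'l \<Rightarrow> real"
    and mv :: "'v \<Rightarrow> 'l \<Rightarrow> real" and me :: "'v set \<Rightarrow> ('v \<Rightarrow> 'l) \<Rightarrow> real"
  assumes "graph_ok V E"
    and "finite X" and "card X \<ge> 2"
    and "\<eta> > 0"
    and "local_polytope V E X mv me"
  shows "\<exists>mv' me'.
           slack_polytope V E X (nu_lam E X \<eta> Cv Ce lam) mv' me'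
         \<and> l1_dist V E X mv me mv' me'
             \<le> 16 * real (card E + card V) * real (card X)
                  * Max {nu_norm X (nu_lam E X \<eta> Cv Ce lam) e i | e i. e \<in> E \<and> i \<in> e}
               + 2 * (\<Sum>e\<in>E. \<Sum>i\<in>e. nu_norm X (nu_lam E X \<eta> Cv Ce lam) e i)"
proof -
  define nu where "nu = nu_lam E X \<eta> Cv Ce lam"
  define \<delta> where "\<delta> = Max {nu_norm X nu e i | e i. e \<in> E \<and> i \<in> e}"
  note edges = graph_ok_edge[OF assms(1)]
  have X: "X \<noteq> {}" using assms(3) by auto
  have nu_le: "\<And>e i x. e \<in> E \<Longrightarrow> i \<in> e \<Longrightarrow> x \<in> X \<Longrightarrow> \<bar>nu e i x\<bar> \<le> \<delta>"
    unfolding \<delta>_def using graph_ok_finite_edges[OF assms(1)] edges assms(2)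
    by (intro abs_le_Max_nu_norm) auto
  have nu_sum: "\<And>e i. e \<in> E \<Longrightarrow> i \<in> e \<Longrightarrow> (\<Sum>x\<in>X. nu e i x) = 0"
    unfolding nu_def using edges assms(2) X by (simp add: sum_nu_lam_eq_0)
  have norms_nonneg: "0 \<le> (\<Sum>e\<in>E. \<Sum>i\<in>e. nu_norm X nu e i)"
    unfolding nu_norm_def by (intro sum_nonneg) auto
  show ?thesis
  proof (cases "E = {}")
    case True
    then show ?thesis using graph_ok_no_edges[of V] assms(1,5)
      by (intro exI[of _ mv] exI[of _ me]) (simp add: slack_polytope_def l1_dist_def)
  next
    case False
    then have "0 \<le> \<delta>" using nu_le X edges by (meson abs_ge_zero all_not_in_conv order_trans)
    then obtain mv' me' where "slack_polytope V E X nu mv' me'" and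
      "l1_dist V E X mv me mv' me' \<le> 2 * real (card E + card V) * min 1 (real (card X) * \<delta>)"
      using exists_slack_polytope_point_near[of V E X mv me nu \<delta>, OF assms(5,2) X edges nu_sum nu_le]
        gibbs_marginals_in_slack_polytope[OF assms(2) X] unfolding nu_def by blast
    moreover have "2 * real (card E + card V) * min 1 (real (card X) * \<delta>)
                   \<le> 16 * real (card E + card V) * real (card X) * \<delta>"
      using \<open>0 \<le> \<delta>\<close> by (simp add: mult.assoc mult_mono')
    ultimately show ?thesis using norms_nonneg unfolding nu_def \<delta>_def
      by (intro exI[of _ mv'] exI[of _ me']) auto
  qed
qed

end
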